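(* Let $n\ge1$, $1\le k\le n$, $\ell\ge1$, $r:=n(n+1)/2$, $\Sigma\in\mathbb{S}^n$, and let $\tilde\varphi$ be the single-layer objective described in the context. Let $D>0$ and $$\mathcal{D}:=\{(A,b,C,d)\in\mathbb{R}^{\ell\times r}\times\mathbb{R}^\ell\times\mathbb{R}^{nk\times\ell}\times\mathbb{R}^{nk}: \|(A,b,C,d)\|\le D\}.$$ Then the function $\Theta=(A,b,C,d)\mapsto \frac{\partial\tilde\varphi(\Theta)}{\partial b}\in\mathbb{R}^\ell$ is Lipschitz continuous on $\mathcal{D}$ with a constant $L_b$ for which $$L_b^2=\mathcal{C}_b\, n^2D^2\max\{\ell D^2L_Z^2,\ \ell^2D^6L_Z^2,\ \ell^3D^4,\ n\ell\},$$ where $L_Z:=\sqrt{1+\|\Sigma\|_S^2}$ and $\mathcal{C}_b$ is a constant that only depends polynomially on $\sigma'_{\max},\sigma''_{\max},\mu''_{\max}$.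
   Context: $\mathbb{S}^n$ denotes the real symmetric $n\times n$ matrices. $h:\mathbb{S}^n\to\mathbb{R}^{n(n+1)/2}$, $h(\Sigma)=(\Sigma_{1,1},\dots,\Sigma_{1,n},\Sigma_{2,2},\dots,\Sigma_{2,n},\dots,\Sigma_{n,n})^T$, and $\|\Sigma\|_S:=\|h(\Sigma)\|$ (Euclidean norm). $g:\mathbb{R}^{nk}\to\mathbb{R}^{n\times k}$ maps $v$ to $W$ with $W_{i,j}=v_{(i-1)k+j}$. The activation $\sigma:\mathbb{R}\to[-1,1]$ is twice differentiable with $|\sigma'|\le\sigma'_{\max}$ ($\sigma'_{\max}>0$) and $|\sigma''|\le\sigma''_{\max}$; $\tilde\sigma(u):=(\sigma(u_1),\dots,\sigma(u_\ell))^T$. $\mu:\mathbb{R}\to\mathbb{R}$ is smooth with $|\mu'|\le1$, $|\mu''|\le\mu''_{\max}$. For $\Theta=(A,b,C,d)$ with $A\in\mathbb{R}^{\ell\times r}$, $b\in\mathbb{R}^\ell$, $C\in\mathbb{R}^{nk\times\ell}$, $d\in\mathbb{R}^{nk}$, the single-layer network is $\mathcal{N}^\Theta(x):=C\tilde\sigma(Ax+b)+d$, and with $M_\Theta:=g(\mathcal{N}^\Theta(h(\Sigma)))$, $\tilde\varphi(\Theta):=\sum_{i,j=1}^n\mu\big([M_\Theta M_\Theta^T-\Sigma]_{i,j}\big)$. The norm of a list of matrices is $\|(X^1,\dots,X^\gamma)\|:=(\sum_i\|X^i\|_F^2)^{1/2}$, and Lipschitz continuity is with respect to this norm on parameters and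 the Euclidean norm on $\mathbb{R}^\ell$. *)

theory Defs
  imports "HOL-Analysis.Analysis"
begin

(* Conventions: all indices are 0-based.  Matrices are functions nat => nat => real,
   vectors are functions nat => real; only entries inside the stated dimensions matter. *)

definition smooth_fun :: "(real \<Rightarrow> real) \<Rightarrow> bool" where
  "smooth_fun f \<longleftrightarrow> (\<exists>Df :: nat \<Rightarrow> real \<Rightarrow> real. Df 0 = f \<and>
      (\<forall>j x. (Df j has_real_derivative Df (Suc j) x) (at x)))"

definition hvec :: "nat \<Rightarrow> (nat \<Rightarrow> nat \<Rightarrow> real) \<Rightarrow> real list" where
  "hvec n S = concat (map (\<lambda>i. map (\<lambda>j. S i j) [i..<n]) [0..<n])"

definition normS :: "nat \<Rightarrow> (nat \<Rightarrow> nat \<Rightarrow> real) \<Rightarrow> real" where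
  "normS n S = sqrt (sum_list (map (\<lambda>x. x\<^sup>2) (hvec n S)))"

definition gmat :: "nat \<Rightarrow> (nat \<Rightarrow> real) \<Rightarrow> (nat \<Rightarrow> nat \<Rightarrow> real)" where
  "gmat k v = (\<lambda>i j. v (i * k + j))"

definition net :: "(real \<Rightarrow> real) \<Rightarrow> nat \<Rightarrow> nat \<Rightarrow> (nat \<Rightarrow> nat \<Rightarrow> real) \<Rightarrow> (nat \<Rightarrow> real)
    \<Rightarrow> (nat \<Rightarrow> nat \<Rightarrow> real) \<Rightarrow> (nat \<Rightarrow> real) \<Rightarrow> (nat \<Rightarrow> real) \<Rightarrow> (nat \<Rightarrow> real)" where
  "net \<sigma> r l A b C d x = (\<lambda>p. (\<Sum>q<l. C p q * \<sigma> ((\<Sum>s<r. A q s * x s) + b q)) + d p)"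

definition phi :: "(real \<Rightarrow> real) \<Rightarrow> (real \<Rightarrow> real) \<Rightarrow> nat \<Rightarrow> nat \<Rightarrow> nat \<Rightarrow> (nat \<Rightarrow> nat \<Rightarrow> real)
    \<Rightarrow> (nat \<Rightarrow> nat \<Rightarrow> real) \<Rightarrow> (nat \<Rightarrow> real) \<Rightarrow> (nat \<Rightarrow> nat \<Rightarrow> real) \<Rightarrow> (nat \<Rightarrow> real) \<Rightarrow> real" where
  "phi \<sigma> \<mu> n k l S A b C d =
     (let r = n * (n + 1) div 2;
          M = gmat k (net \<sigma> r l A b C d (\<lambda>s. hvec n S ! s))
      in (\<Sum>i<n. \<Sum>j<n. \<mu> ((\<Sum>t<k. M i t * M j t) - S i j)))"

definition param_norm :: "nat \<Rightarrow> nat \<Rightarrow> nat \<Rightarrow> (nat \<Rightarrow> nat \<Rightarrow> real) \<Rightarrow> (nat \<Rightarrow> real)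
    \<Rightarrow> (nat \<Rightarrow> nat \<Rightarrow> real) \<Rightarrow> (nat \<Rightarrow> real) \<Rightarrow> real" where
  "param_norm n k l A b C d =
     (let r = n * (n + 1) div 2 in
      sqrt ((\<Sum>q<l. \<Sum>s<r. (A q s)\<^sup>2) + (\<Sum>q<l. (b q)\<^sup>2)
          + (\<Sum>p<n*k. \<Sum>q<l. (C p q)\<^sup>2) + (\<Sum>p<n*k. (d p)\<^sup>2)))"

definition grad_b :: "(real \<Rightarrow> real) \<Rightarrow> (real \<Rightarrow> real) \<Rightarrow> nat \<Rightarrow> nat \<Rightarrow> nat \<Rightarrow> (nat \<Rightarrow> nat \<Rightarrow> real)
    \<Rightarrow> (nat \<Rightarrow> nat \<Rightarrow> real) \<Rightarrow> (nat \<Rightarrow> real) \<Rightarrow> (nat \<Rightarrow> nat \<Rightarrow> real) \<Rightarrow> (nat \<Rightarrow> real) \<Rightarrow> (nat \<Rightarrow> real)" where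
  "grad_b \<sigma> \<mu> n k l S A b C d =
     (\<lambda>q. deriv (\<lambda>t. phi \<sigma> \<mu> n k l S A (b(q := b q + t)) C d) 0)"

definition vnorm :: "nat \<Rightarrow> (nat \<Rightarrow> real) \<Rightarrow> real" where
  "vnorm l v = sqrt (\<Sum>q<l. (v q)\<^sup>2)"

end

theory Submission
  imports Defs
begin

(* With z = A h(Sigma) + b, y = N(h(Sigma)) and W = mu'(M M^T - Sigma) taken entrywise, the partial
   gradient in b_q is sigma'(z_q) times the Frobenius pairing of W with g(C_q) g(y)^T + g(y) g(C_q)^T.
   The pairing is trilinear and bounded by 2 |W|_F |C_q| |y|, so the difference of two gradients
   splits into four terms, each a difference in one factor times bounds on the others:
   |W|_F <= n and |y|^2 <= 4 l D^2 on the ball, while z, sigma(z), y and W are Lipschitz in Theta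
   with constants built from L_Z^2 = 1 + |Sigma|_S^2, sigma'_max and mu''_max.  Every monomial in
   n, l, D, L_Z that arises is at most n^2 D^2 times the maximum in the statement. *)

definition sqnorm :: "nat \<Rightarrow> (nat \<Rightarrow> real) \<Rightarrow> real" where
  "sqnorm N v = (\<Sum>p<N. (v p)\<^sup>2)"

definition frob_sqnorm :: "nat \<Rightarrow> nat \<Rightarrow> (nat \<Rightarrow> nat \<Rightarrow> real) \<Rightarrow> real" where
  "frob_sqnorm m n A = (\<Sum>i<m. \<Sum>j<n. (A i j)\<^sup>2)"

lemma sqnorm_nonneg [simp]: "0 \<le> sqnorm N v"
  by (simp add: sqnorm_def sum_nonneg)

lemma frob_sqnorm_nonneg [simp]: "0 \<le> frob_sqnorm m n A"
  by (simp add: frob_sqnorm_def sum_nonneg)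

lemma frob_sqnorm_eq_sum_sqnorm_columns: "frob_sqnorm m n A = (\<Sum>j<n. sqnorm m (\<lambda>i. A i j))"
  unfolding frob_sqnorm_def sqnorm_def by (rule sum.swap)

lemma sqnorm_column_le_frob_sqnorm:
  assumes "j < n" shows "sqnorm m (\<lambda>i. A i j) \<le> frob_sqnorm m n A"
  unfolding frob_sqnorm_eq_sum_sqnorm_columns using assms
  by (intro member_le_sum) auto

lemma sqnorm_le_of_abs_le_1:
  assumes "\<And>q. q < l \<Longrightarrow> \<bar>u q\<bar> \<le> 1" shows "sqnorm l u \<le> real l"
proof -
  have "sqnorm l u \<le> (\<Sum>q<l. 1)"
    unfolding sqnorm_def using assms by (intro sum_mono) (simp add: abs_square_le_1)
  then show ?thesis by simp
qed

lemma frob_sqnorm_le_of_abs_le_1: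
  assumes "\<And>i j. \<bar>A i j\<bar> \<le> 1" shows "frob_sqnorm n n A \<le> (real n)\<^sup>2"
proof -
  have "frob_sqnorm n n A \<le> (\<Sum>i<n. \<Sum>j<n. 1)"
    unfolding frob_sqnorm_def using assms by (intro sum_mono) (simp add: abs_square_le_1)
  then show ?thesis by (simp add: power2_eq_square)
qed

lemma power2_sum_mult_le_sqnorm: "(\<Sum>q<l. a q * u q)\<^sup>2 \<le> sqnorm l a * sqnorm l u"
  unfolding sqnorm_def by (rule Cauchy_Schwarz_ineq_sum)

lemma power2_affine_le:
  fixes a x :: "nat \<Rightarrow> real"
  shows "((\<Sum>s<r. a s * x s) + \<beta>)\<^sup>2 \<le> ((\<Sum>s<r. (a s)\<^sup>2) + \<beta>\<^sup>2) * (1 + (\<Sum>s<r. (x s)\<^sup>2))"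
  using Cauchy_Schwarz_ineq_sum[of "a(r := \<beta>)" "x(r := 1)" "{..<Suc r}"]
  by (simp add: add.commute)

lemma power2_add_le: "(a + b)\<^sup>2 \<le> 2 * (a\<^sup>2 + (b::real)\<^sup>2)"
  using zero_le_power2[of "a - b"] by (simp add: power2_eq_square algebra_simps)

lemma power2_add3_le: "(a + b + c)\<^sup>2 \<le> 3 * (a\<^sup>2 + b\<^sup>2 + (c::real)\<^sup>2)"
  using zero_le_power2[of "a - b"] zero_le_power2[of "b - c"] zero_le_power2[of "a - c"]
  by (simp add: power2_eq_square algebra_simps)

lemma power2_add4_le: "(a + b + c + e)\<^sup>2 \<le> 4 * (a\<^sup>2 + b\<^sup>2 + c\<^sup>2 + (e::real)\<^sup>2)"
  using zero_le_power2[of "a - b"] zero_le_power2[of "a - c"] zero_le_power2[of "a - e"]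
    zero_le_power2[of "b - c"] zero_le_power2[of "b - e"] zero_le_power2[of "c - e"]
  by (simp add: power2_eq_square algebra_simps)

lemma power2_diff_le_of_deriv_bound:
  fixes f :: "real \<Rightarrow> real"
  assumes "\<And>x. (f has_real_derivative f' x) (at x)" and "\<And>x. \<bar>f' x\<bar> \<le> B"
  shows "(f a - f b)\<^sup>2 \<le> B\<^sup>2 * (a - b)\<^sup>2"
proof -
  have "\<bar>f a - f b\<bar> \<le> B * \<bar>a - b\<bar>"
    using field_differentiable_bound[of UNIV f f' B a b] assms by auto
  then have "\<bar>f a - f b\<bar>\<^sup>2 \<le> (B * \<bar>a - b\<bar>)\<^sup>2"
    by (intro power_mono) auto
  then show ?thesis by (simp add: power_mult_distrib)
qed

lemma sum_blocks:
  fixes f :: "nat \<Rightarrow> real"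
  shows "(\<Sum>i<n. \<Sum>t<k. f (i * k + t)) = (\<Sum>p<n * k. f p)"
proof -
  have "(\<Sum>t<k. f (i * k + t)) = (\<Sum>p\<in>{i * k..<i * k + k}. f p)" for i
    using sum.shift_bounds_nat_ivl[of f 0 "i * k" k] by (simp add: lessThan_atLeast0 add.commute)
  then show ?thesis using sum.nat_group[of f k n] by simp
qed

definition gmat_mult_transpose :: "nat \<Rightarrow> (nat \<Rightarrow> real) \<Rightarrow> (nat \<Rightarrow> real) \<Rightarrow> nat \<Rightarrow> nat \<Rightarrow> real" where
  "gmat_mult_transpose k u v i j = (\<Sum>t<k. gmat k u i t * gmat k v j t)"

lemma frob_sqnorm_gmat_mult_transpose_le:
  "frob_sqnorm n n (gmat_mult_transpose k u v) \<le> sqnorm (n * k) u * sqnorm (n * k) v"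
proof -
  have "frob_sqnorm n n (gmat_mult_transpose k u v)
      \<le> (\<Sum>i<n. \<Sum>j<n. (\<Sum>t<k. (u (i * k + t))\<^sup>2) * (\<Sum>t<k. (v (j * k + t))\<^sup>2))"
    unfolding frob_sqnorm_def gmat_mult_transpose_def gmat_def
    by (intro sum_mono Cauchy_Schwarz_ineq_sum)
  also have "\<dots> = (\<Sum>i<n. \<Sum>t<k. (u (i * k + t))\<^sup>2) * (\<Sum>j<n. \<Sum>t<k. (v (j * k + t))\<^sup>2)"
    by (simp add: sum_product)
  also have "\<dots> = sqnorm (n * k) u * sqnorm (n * k) v"
    unfolding sqnorm_def
    by (simp add: sum_blocks[of "\<lambda>p. (u p)\<^sup>2"] sum_blocks[of "\<lambda>p. (v p)\<^sup>2"])
  finally show ?thesis .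
qed

lemma gmat_mult_transpose_diff_left:
  "gmat_mult_transpose k (\<lambda>p. u p - u' p) v i j = gmat_mult_transpose k u v i j - gmat_mult_transpose k u' v i j"
  unfolding gmat_mult_transpose_def gmat_def by (simp add: sum_subtractf[symmetric] algebra_simps)

lemma gmat_mult_transpose_diff_right:
  "gmat_mult_transpose k u (\<lambda>p. v p - v' p) i j = gmat_mult_transpose k u v i j - gmat_mult_transpose k u v' i j"
  unfolding gmat_mult_transpose_def gmat_def by (simp add: sum_subtractf[symmetric] algebra_simps)

(* The Frobenius pairing of w with g(u) g(v)^T + g(v) g(u)^T, i.e. the derivative of
   the weighted Gram entries sum_ij w_ij (g(v) g(v)^T)_ij in the direction u. *)
definition gram_pairing :: "nat \<Rightarrow> nat \<Rightarrow> (nat \<Rightarrow> nat \<Rightarrow> real) \<Rightarrow> (nat \<Rightarrow> real) \<Rightarrow> (nat \<Rightarrow> real) \<Rightarrow> real" where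
  "gram_pairing n k w u v =
     (\<Sum>i<n. \<Sum>j<n. w i j * (gmat_mult_transpose k u v i j + gmat_mult_transpose k v u i j))"

lemma gram_pairing_power2_le:
  "(gram_pairing n k w u v)\<^sup>2 \<le> 4 * frob_sqnorm n n w * sqnorm (n * k) u * sqnorm (n * k) v"
proof -
  let ?G = "\<lambda>i j. gmat_mult_transpose k u v i j + gmat_mult_transpose k v u i j"
  have "(gram_pairing n k w u v)\<^sup>2 \<le> frob_sqnorm n n w * frob_sqnorm n n ?G"
    using Cauchy_Schwarz_ineq_sum[of "\<lambda>(i, j). w i j" "\<lambda>(i, j). ?G i j" "{..<n} \<times> {..<n}"]
    unfolding gram_pairing_def frob_sqnorm_def by (simp add: sum.cartesian_product case_prod_beta)
  also have "frob_sqnorm n n ?G \<le> (\<Sum>i<n. \<Sum>j<n.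
      2 * ((gmat_mult_transpose k u v i j)\<^sup>2 + (gmat_mult_transpose k v u i j)\<^sup>2))"
    unfolding frob_sqnorm_def by (intro sum_mono power2_add_le)
  also have "\<dots> = 2 * (frob_sqnorm n n (gmat_mult_transpose k u v) + frob_sqnorm n n (gmat_mult_transpose k v u))"
    unfolding frob_sqnorm_def by (simp add: sum_distrib_left sum.distrib)
  also have "\<dots> \<le> 4 * (sqnorm (n * k) u * sqnorm (n * k) v)"
    using frob_sqnorm_gmat_mult_transpose_le[of n k u v] frob_sqnorm_gmat_mult_transpose_le[of n k v u]
    by (simp add: mult.commute[of "sqnorm (n * k) v"])
  finally show ?thesis
    by (simp add: mult_left_mono mult.assoc)
qed

lemma gram_pairing_diff:
  "gram_pairing n k w u v - gram_pairing n k w' u' v' =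
     gram_pairing n k (\<lambda>i j. w i j - w' i j) u v + gram_pairing n k w' (\<lambda>p. u p - u' p) v
     + gram_pairing n k w' u' (\<lambda>p. v p - v' p)"
  unfolding gram_pairing_def gmat_mult_transpose_diff_left gmat_mult_transpose_diff_right
  by (simp add: sum_subtractf[symmetric] sum.distrib[symmetric] algebra_simps)

lemma scaled_gram_pairing_diff_power2_le:
  fixes n k :: nat
  defines "N \<equiv> n * k"
  shows "(a * gram_pairing n k w u v - a' * gram_pairing n k w' u' v')\<^sup>2 \<le> 16 *
     ((a - a')\<^sup>2 * frob_sqnorm n n w * sqnorm N u * sqnorm N v
      + a'\<^sup>2 * (frob_sqnorm n n (\<lambda>i j. w i j - w' i j) * sqnorm N u * sqnorm N v
               + frob_sqnorm n n w' * sqnorm N (\<lambda>p. u p - u' p) * sqnorm N v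
               + frob_sqnorm n n w' * sqnorm N u' * sqnorm N (\<lambda>p. v p - v' p)))"
proof -
  let ?G = "gram_pairing n k w u v"
  let ?G1 = "gram_pairing n k (\<lambda>i j. w i j - w' i j) u v"
  let ?G2 = "gram_pairing n k w' (\<lambda>p. u p - u' p) v"
  let ?G3 = "gram_pairing n k w' u' (\<lambda>p. v p - v' p)"
  have "a * ?G - a' * gram_pairing n k w' u' v' = (a - a') * ?G + a' * ?G1 + a' * ?G2 + a' * ?G3"
    using gram_pairing_diff[of n k w u v w' u' v'] by (simp add: algebra_simps)
  then have "(a * ?G - a' * gram_pairing n k w' u' v')\<^sup>2 = ((a - a') * ?G + a' * ?G1 + a' * ?G2 + a' * ?G3)\<^sup>2"
    by simp
  also have "\<dots> \<le> 4 * (((a - a') * ?G)\<^sup>2 + (a' * ?G1)\<^sup>2 + (a' * ?G2)\<^sup>2 + (a' * ?G3)\<^sup>2)"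
    by (rule power2_add4_le)
  also have "\<dots> = 4 * ((a - a')\<^sup>2 * ?G\<^sup>2 + a'\<^sup>2 * (?G1\<^sup>2 + ?G2\<^sup>2 + ?G3\<^sup>2))"
    unfolding power_mult_distrib by (simp add: distrib_left)
  also have "\<dots> \<le> 4 * ((a - a')\<^sup>2 * (4 * frob_sqnorm n n w * sqnorm N u * sqnorm N v)
      + a'\<^sup>2 * (4 * frob_sqnorm n n (\<lambda>i j. w i j - w' i j) * sqnorm N u * sqnorm N v
               + 4 * frob_sqnorm n n w' * sqnorm N (\<lambda>p. u p - u' p) * sqnorm N v
               + 4 * frob_sqnorm n n w' * sqnorm N u' * sqnorm N (\<lambda>p. v p - v' p)))"
    unfolding N_def by (intro mult_left_mono add_mono gram_pairing_power2_le) auto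
  finally show ?thesis by (simp add: algebra_simps)
qed

definition preact :: "nat \<Rightarrow> (nat \<Rightarrow> nat \<Rightarrow> real) \<Rightarrow> (nat \<Rightarrow> real) \<Rightarrow> (nat \<Rightarrow> real) \<Rightarrow> nat \<Rightarrow> real" where
  "preact r A b x q = (\<Sum>s<r. A q s * x s) + b q"

lemma net_eq: "net \<sigma> r l A b C d x = (\<lambda>p. (\<Sum>q<l. C p q * \<sigma> (preact r A b x q)) + d p)"
  unfolding net_def preact_def ..

lemma sqnorm_affine_le:
  assumes "\<And>q. q < l \<Longrightarrow> \<bar>u q\<bar> \<le> 1"
  shows "sqnorm N (\<lambda>p. (\<Sum>q<l. C p q * u q) + d p) \<le> 2 * (real l * frob_sqnorm N l C + sqnorm N d)"
proof -
  have "sqnorm N (\<lambda>p. (\<Sum>q<l. C p q * u q) + d p) \<le> (\<Sum>p<N. 2 * ((\<Sum>q<l. C p q * u q)\<^sup>2 + (d p)\<^sup>2))"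
    unfolding sqnorm_def by (intro sum_mono power2_add_le)
  also have "\<dots> \<le> (\<Sum>p<N. 2 * (sqnorm l (C p) * real l + (d p)\<^sup>2))"
  proof (intro sum_mono mult_left_mono add_mono order_refl)
    fix p
    show "(\<Sum>q<l. C p q * u q)\<^sup>2 \<le> sqnorm l (C p) * real l"
      using power2_sum_mult_le_sqnorm[of "C p" u l] sqnorm_le_of_abs_le_1[OF assms]
      by (meson mult_left_mono order_trans sqnorm_nonneg)
  qed simp
  also have "\<dots> = 2 * (real l * frob_sqnorm N l C + sqnorm N d)"
    unfolding frob_sqnorm_def sqnorm_def by (simp add: sum.distrib sum_distrib_left sum_distrib_right algebra_simps)
  finally show ?thesis .
qed

lemma sqnorm_affine_diff_le:
  assumes "\<And>q. q < l \<Longrightarrow> \<bar>u q\<bar> \<le> 1"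
  shows "sqnorm N (\<lambda>p. ((\<Sum>q<l. C p q * u q) + d p) - ((\<Sum>q<l. C' p q * u' q) + d' p))
    \<le> 3 * (real l * frob_sqnorm N l (\<lambda>p q. C p q - C' p q) + frob_sqnorm N l C' * sqnorm l (\<lambda>q. u q - u' q)
           + sqnorm N (\<lambda>p. d p - d' p))"
proof -
  have split: "((\<Sum>q<l. C p q * u q) + d p) - ((\<Sum>q<l. C' p q * u' q) + d' p)
      = (\<Sum>q<l. (C p q - C' p q) * u q) + (\<Sum>q<l. C' p q * (u q - u' q)) + (d p - d' p)" for p
    by (simp add: sum_subtractf[symmetric] sum.distrib[symmetric] algebra_simps)
  have "sqnorm N (\<lambda>p. ((\<Sum>q<l. C p q * u q) + d p) - ((\<Sum>q<l. C' p q * u' q) + d' p))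
     \<le> (\<Sum>p<N. 3 * ((\<Sum>q<l. (C p q - C' p q) * u q)\<^sup>2 + (\<Sum>q<l. C' p q * (u q - u' q))\<^sup>2 + (d p - d' p)\<^sup>2))"
    unfolding sqnorm_def split by (intro sum_mono power2_add3_le)
  also have "\<dots> \<le> (\<Sum>p<N. 3 * (sqnorm l (\<lambda>q. C p q - C' p q) * real l
      + sqnorm l (C' p) * sqnorm l (\<lambda>q. u q - u' q) + (d p - d' p)\<^sup>2))"
  proof (intro sum_mono mult_left_mono add_mono order_refl)
    fix p
    show "(\<Sum>q<l. (C p q - C' p q) * u q)\<^sup>2 \<le> sqnorm l (\<lambda>q. C p q - C' p q) * real l"
      using power2_sum_mult_le_sqnorm[of "\<lambda>q. C p q - C' p q" u l] sqnorm_le_of_abs_le_1[OF assms]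
      by (meson mult_left_mono order_trans sqnorm_nonneg)
    show "(\<Sum>q<l. C' p q * (u q - u' q))\<^sup>2 \<le> sqnorm l (C' p) * sqnorm l (\<lambda>q. u q - u' q)"
      by (rule power2_sum_mult_le_sqnorm)
  qed simp
  also have "\<dots> = 3 * (real l * frob_sqnorm N l (\<lambda>p q. C p q - C' p q) + frob_sqnorm N l C' * sqnorm l (\<lambda>q. u q - u' q)
           + sqnorm N (\<lambda>p. d p - d' p))"
    unfolding frob_sqnorm_def sqnorm_def by (simp add: sum.distrib sum_distrib_left sum_distrib_right algebra_simps)
  finally show ?thesis .
qed

lemma sqnorm_preact_diff_le:
  "sqnorm l (\<lambda>q. preact r A b x q - preact r A' b' x q)
     \<le> (1 + sqnorm r x) * (frob_sqnorm l r (\<lambda>q s. A q s - A' q s) + sqnorm l (\<lambda>q. b q - b' q))"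
proof -
  have "preact r A b x q - preact r A' b' x q = (\<Sum>s<r. (A q s - A' q s) * x s) + (b q - b' q)" for q
    unfolding preact_def by (simp add: sum_subtractf[symmetric] algebra_simps)
  then have "(preact r A b x q - preact r A' b' x q)\<^sup>2
      \<le> (sqnorm r (\<lambda>s. A q s - A' q s) + (b q - b' q)\<^sup>2) * (1 + sqnorm r x)" for q
    using power2_affine_le[of "\<lambda>s. A q s - A' q s" x r "b q - b' q"] by (simp add: sqnorm_def)
  then have "sqnorm l (\<lambda>q. preact r A b x q - preact r A' b' x q)
      \<le> (\<Sum>q<l. (1 + sqnorm r x) * (sqnorm r (\<lambda>s. A q s - A' q s) + (b q - b' q)\<^sup>2))"
    unfolding sqnorm_def by (intro sum_mono) (simp add: mult.commute)
  also have "\<dots> = (1 + sqnorm r x) * (frob_sqnorm l r (\<lambda>q s. A q s - A' q s) + sqnorm l (\<lambda>q. b q - b' q))"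
    unfolding frob_sqnorm_def sqnorm_def by (simp only: sum.distrib[symmetric] sum_distrib_left)
  finally show ?thesis .
qed

lemma param_norm_power2:
  "(param_norm n k l A b C d)\<^sup>2 =
     frob_sqnorm l (n * (n + 1) div 2) A + sqnorm l b + frob_sqnorm (n * k) l C + sqnorm (n * k) d"
  unfolding param_norm_def frob_sqnorm_def sqnorm_def Let_def
  by (simp add: add_nonneg_nonneg sum_nonneg)

lemma param_norm_nonneg [simp]: "0 \<le> param_norm n k l A b C d"
  unfolding param_norm_def Let_def by (simp add: sum_nonneg add_nonneg_nonneg)

lemma param_norm_power2_ge:
  shows "frob_sqnorm l (n * (n + 1) div 2) A + sqnorm l b \<le> (param_norm n k l A b C d)\<^sup>2"
    and "frob_sqnorm (n * k) l C \<le> (param_norm n k l A b C d)\<^sup>2"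
    and "sqnorm (n * k) d \<le> (param_norm n k l A b C d)\<^sup>2"
  unfolding param_norm_power2 by (simp_all add: add_nonneg_nonneg)

lemma sqnorm_preact_diff_le_param_norm:
  fixes n k l :: nat and A C A' C' :: "nat \<Rightarrow> nat \<Rightarrow> real" and b d b' d' :: "nat \<Rightarrow> real"
  defines "r \<equiv> n * (n + 1) div 2"
  shows "sqnorm l (\<lambda>q. preact r A b x q - preact r A' b' x q)
    \<le> (1 + sqnorm r x) * (param_norm n k l (\<lambda>q s. A q s - A' q s) (\<lambda>q. b q - b' q)
                              (\<lambda>p q. C p q - C' p q) (\<lambda>p. d p - d' p))\<^sup>2"
proof -
  have "frob_sqnorm l r (\<lambda>q s. A q s - A' q s) + sqnorm l (\<lambda>q. b q - b' q)
      \<le> (param_norm n k l (\<lambda>q s. A q s - A' q s) (\<lambda>q. b q - b' q) (\<lambda>p q. C p q - C' p q) (\<lambda>p. d p - d' p))\<^sup>2"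
    unfolding r_def by (rule param_norm_power2_ge(1))
  from order_trans[OF sqnorm_preact_diff_le mult_left_mono[OF this]] show ?thesis by simp
qed

lemma length_hvec: "length (hvec n S) = n * (n + 1) div 2"
proof -
  have "2 * (\<Sum>i<n. n - i) = n * (n + 1)"
  proof (induction n)
    case (Suc n)
    have "(\<Sum>i<n. Suc n - i) = (\<Sum>i<n. (n - i) + 1)"
      by (rule sum.cong) auto
    also have "\<dots> = (\<Sum>i<n. n - i) + n"
      unfolding sum.distrib by simp
    finally have "(\<Sum>i<Suc n. Suc n - i) = (\<Sum>i<n. n - i) + Suc n"
      by simp
    then show ?case using Suc.IH by simp
  qed simp
  moreover have "length (hvec n S) = (\<Sum>i<n. n - i)"
    unfolding hvec_def length_concat
    by (simp add: o_def sum_list_sum_nth atLeast0LessThan)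
  ultimately show ?thesis by simp
qed

lemma normS_power2: "(normS n S)\<^sup>2 = sqnorm (n * (n + 1) div 2) (\<lambda>s. hvec n S ! s)"
proof -
  have "sum_list (map (\<lambda>x. x\<^sup>2) (hvec n S)) = sqnorm (n * (n + 1) div 2) (\<lambda>s. hvec n S ! s)"
    by (simp add: sqnorm_def sum_list_sum_nth atLeast0LessThan length_hvec)
  then show ?thesis by (simp add: normS_def)
qed

lemma net_has_derivative_bias:
  assumes "\<And>x. (\<sigma> has_real_derivative \<sigma>' x) (at x)" and "q < l"
  shows "((\<lambda>t. net \<sigma> r l A (b(q := b q + t)) C d x p) has_real_derivative
           \<sigma>' (preact r A b x q) * C p q) (at 0)"
proof -
  have shifted: "preact r A (b(q := b q + t)) x q' = (if q' = q then t else 0) + preact r A b x q'" for t q'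
    by (simp add: preact_def)
  have "((\<lambda>t. \<sigma> (t + preact r A b x q)) has_real_derivative \<sigma>' (preact r A b x q)) (at 0)"
    using DERIV_shift[of \<sigma> "\<sigma>' (preact r A b x q)" 0 "preact r A b x q"] assms(1) by simp
  from DERIV_cmult[OF this, of "C p q"]
  have "((\<lambda>t. C p q' * \<sigma> ((if q' = q then t else 0) + preact r A b x q')) has_real_derivative
          (if q' = q then \<sigma>' (preact r A b x q) * C p q else 0)) (at 0)" for q'
    by (cases "q' = q") (auto simp: mult.commute)
  then have "((\<lambda>t. (\<Sum>q'<l. C p q' * \<sigma> ((if q' = q then t else 0) + preact r A b x q')) + d p)
      has_real_derivative (\<Sum>q'<l. if q' = q then \<sigma>' (preact r A b x q) * C p q else 0) + 0) (at 0)"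
    by (intro DERIV_add DERIV_sum DERIV_const)
  then show ?thesis using assms(2) by (simp add: net_eq shifted)
qed

lemma gram_loss_has_derivative:
  assumes "\<And>p. ((\<lambda>t. Y t p) has_real_derivative Y' p) (at t0)"
    and "\<And>x. (\<mu> has_real_derivative \<mu>' x) (at x)"
  shows "((\<lambda>t. \<Sum>i<n. \<Sum>j<n. \<mu> (gmat_mult_transpose k (Y t) (Y t) i j - S i j)) has_real_derivative
     gram_pairing n k (\<lambda>i j. \<mu>' (gmat_mult_transpose k (Y t0) (Y t0) i j - S i j)) Y' (Y t0)) (at t0)"
proof -
  have "((\<lambda>t. gmat_mult_transpose k (Y t) (Y t) i j - S i j) has_real_derivative
      gmat_mult_transpose k Y' (Y t0) i j + gmat_mult_transpose k (Y t0) Y' i j) (at t0)" for i j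
    unfolding gmat_mult_transpose_def gmat_def
    by (auto intro!: derivative_eq_intros assms(1) simp: sum.distrib[symmetric] algebra_simps)
  then show ?thesis
    unfolding gram_pairing_def
    by (intro DERIV_sum) (auto intro: DERIV_chain2[OF assms(2)] simp: mult.commute)
qed

lemma grad_b_eq:
  fixes n k l :: nat and S A C :: "nat \<Rightarrow> nat \<Rightarrow> real" and b d :: "nat \<Rightarrow> real"
  assumes "\<And>x. (\<sigma> has_real_derivative \<sigma>' x) (at x)" and "\<And>x. (\<mu> has_real_derivative \<mu>' x) (at x)"
    and "q < l"
  defines "r \<equiv> n * (n + 1) div 2" and "x \<equiv> \<lambda>s. hvec n S ! s"
  defines "y \<equiv> net \<sigma> r l A b C d x"
  shows "grad_b \<sigma> \<mu> n k l S A b C d q =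
     \<sigma>' (preact r A b x q) *
       gram_pairing n k (\<lambda>i j. \<mu>' (gmat_mult_transpose k y y i j - S i j)) (\<lambda>p. C p q) y"
proof -
  define Y where "Y t = net \<sigma> r l A (b(q := b q + t)) C d x" for t
  have phi_eq: "(\<lambda>t. phi \<sigma> \<mu> n k l S A (b(q := b q + t)) C d)
      = (\<lambda>t. \<Sum>i<n. \<Sum>j<n. \<mu> (gmat_mult_transpose k (Y t) (Y t) i j - S i j))"
    unfolding phi_def Y_def r_def x_def gmat_mult_transpose_def Let_def ..
  have "((\<lambda>t. Y t p) has_real_derivative \<sigma>' (preact r A b x q) * C p q) (at 0)" for p
    unfolding Y_def by (rule net_has_derivative_bias[OF assms(1,3)])
  then have "((\<lambda>t. phi \<sigma> \<mu> n k l S A (b(q := b q + t)) C d) has_real_derivative gram_pairing n k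
      (\<lambda>i j. \<mu>' (gmat_mult_transpose k y y i j - S i j)) (\<lambda>p. \<sigma>' (preact r A b x q) * C p q) y) (at 0)"
    unfolding phi_eq using gram_loss_has_derivative[of Y _ 0, OF _ assms(2)] by (simp add: Y_def y_def)
  then have "grad_b \<sigma> \<mu> n k l S A b C d q = gram_pairing n k
      (\<lambda>i j. \<mu>' (gmat_mult_transpose k y y i j - S i j)) (\<lambda>p. \<sigma>' (preact r A b x q) * C p q) y"
    unfolding grad_b_def by (rule DERIV_imp_deriv)
  then show ?thesis
    unfolding gram_pairing_def gmat_mult_transpose_def gmat_def
    by (simp add: sum_distrib_left sum_distrib_right algebra_simps)
qed

lemma Max_monomials_ge:
  fixes n l D L :: real
  assumes "1 \<le> n" "1 \<le> l" "1 \<le> L"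
  defines "M \<equiv> Max {l * D\<^sup>2 * L, l\<^sup>2 * D ^ 6 * L, l ^ 3 * D ^ 4, n * l}"
  shows "l \<le> M" and "l * D\<^sup>2 * L \<le> M" and "l + D\<^sup>2 * L + 1 \<le> 3 * M"
    and "(l * D\<^sup>2)\<^sup>2 * (l + D\<^sup>2 * L + 1) \<le> 3 * M"
proof -
  have M: "l * D\<^sup>2 * L \<le> M" "l\<^sup>2 * D ^ 6 * L \<le> M" "l ^ 3 * D ^ 4 \<le> M" "n * l \<le> M"
    unfolding M_def by (auto intro: Max_ge)
  have "l \<le> n * l" using assms(1,2) by simp
  then show "l \<le> M" using M(4) by linarith
  show "l * D\<^sup>2 * L \<le> M" by (fact M(1))
  have "D\<^sup>2 * L \<le> l * D\<^sup>2 * L"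
    using mult_right_mono[OF assms(2), of "D\<^sup>2 * L"] assms(3) by (simp add: mult.assoc)
  then show "l + D\<^sup>2 * L + 1 \<le> 3 * M" using M(1) \<open>l \<le> M\<close> assms(2) by linarith
  have "l\<^sup>2 * D ^ 4 \<le> l ^ 3 * D ^ 4"
    using assms(2) by (intro mult_right_mono) (auto simp: power2_eq_square power3_eq_cube)
  moreover have "(l * D\<^sup>2)\<^sup>2 * (l + D\<^sup>2 * L + 1) = l ^ 3 * D ^ 4 + l\<^sup>2 * D ^ 6 * L + l\<^sup>2 * D ^ 4"
    by (simp add: eval_nat_numeral algebra_simps)
  ultimately show "(l * D\<^sup>2)\<^sup>2 * (l + D\<^sup>2 * L + 1) \<le> 3 * M" using M(2,3) by linarith
qed

lemma weight_term_le:
  fixes l D L P s1 m2 M FC Y Y' W dY :: real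
  assumes "0 \<le> l" "0 \<le> P" and M: "(l * D\<^sup>2)\<^sup>2 * (l + D\<^sup>2 * L + 1) \<le> 3 * M"
    and FC: "0 \<le> FC" "FC \<le> D\<^sup>2"
    and Y: "0 \<le> Y" "Y \<le> 4 * (l * D\<^sup>2)" and Y': "Y' \<le> 4 * (l * D\<^sup>2)"
    and dY: "0 \<le> dY" "dY \<le> 3 * (1 + s1\<^sup>2) * (l + D\<^sup>2 * L + 1) * P"
    and W: "W \<le> 2 * m2\<^sup>2 * dY * (Y + Y')"
  shows "W * FC * Y \<le> 576 * m2\<^sup>2 * (1 + s1\<^sup>2) * (D\<^sup>2 * M * P)"
proof -
  have "W \<le> 2 * m2\<^sup>2 * dY * (8 * (l * D\<^sup>2))"
    using W Y(2) Y' dY(1) by (smt (verit) mult_left_mono zero_le_mult_iff zero_le_power2)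
  then have "W * FC * Y \<le> (2 * m2\<^sup>2 * dY * (8 * (l * D\<^sup>2))) * D\<^sup>2 * (4 * (l * D\<^sup>2))"
    using FC Y dY(1) assms(1) by (intro mult_mono) auto
  also have "\<dots> = 64 * m2\<^sup>2 * D\<^sup>2 * ((l * D\<^sup>2)\<^sup>2 * dY)" by (simp add: algebra_simps power2_eq_square)
  also have "\<dots> \<le> 64 * m2\<^sup>2 * D\<^sup>2 * ((l * D\<^sup>2)\<^sup>2 * (3 * (1 + s1\<^sup>2) * (l + D\<^sup>2 * L + 1) * P))"
    using dY(2) by (intro mult_left_mono) auto
  also have "\<dots> = 192 * m2\<^sup>2 * (1 + s1\<^sup>2) * D\<^sup>2 * P * ((l * D\<^sup>2)\<^sup>2 * (l + D\<^sup>2 * L + 1))"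
    by (simp add: algebra_simps)
  also have "\<dots> \<le> 192 * m2\<^sup>2 * (1 + s1\<^sup>2) * D\<^sup>2 * P * (3 * M)"
    using M assms(2) by (intro mult_left_mono) auto
  finally show ?thesis by (simp add: algebra_simps)
qed

lemma gradient_terms_le:
  fixes n l D L P s1 s2 m2 M FC FC' Y Y' Z W dC dY :: real
  assumes "1 \<le> n" "0 \<le> l" "0 \<le> P"
    and M: "l \<le> M" "l * D\<^sup>2 * L \<le> M" "l + D\<^sup>2 * L + 1 \<le> 3 * M"
      "(l * D\<^sup>2)\<^sup>2 * (l + D\<^sup>2 * L + 1) \<le> 3 * M"
    and FC: "0 \<le> FC" "FC \<le> D\<^sup>2" and FC': "FC' \<le> D\<^sup>2"
    and Y: "0 \<le> Y" "Y \<le> 4 * (l * D\<^sup>2)" and Y': "Y' \<le> 4 * (l * D\<^sup>2)"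
    and Z: "0 \<le> Z" "Z \<le> L * P" and dC: "dC \<le> P"
    and dY: "0 \<le> dY" "dY \<le> 3 * (1 + s1\<^sup>2) * (l + D\<^sup>2 * L + 1) * P"
    and W: "W \<le> 2 * m2\<^sup>2 * dY * (Y + Y')"
  shows "s2\<^sup>2 * n\<^sup>2 * (FC * Y * Z) + s1\<^sup>2 * (W * FC * Y + n\<^sup>2 * (dC * Y) + n\<^sup>2 * (FC' * dY))
    \<le> (4 * s2\<^sup>2 + 4 * s1\<^sup>2 + 9 * s1\<^sup>2 * (1 + s1\<^sup>2) + 576 * s1\<^sup>2 * m2\<^sup>2 * (1 + s1\<^sup>2)) * (n\<^sup>2 * D\<^sup>2 * M * P)"
proof -
  have DMP: "0 \<le> D\<^sup>2 * M * P" using M(1) assms(2,3) by simp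
  have t1: "FC * Y * Z \<le> 4 * (D\<^sup>2 * M * P)"
  proof -
    have "FC * Y * Z \<le> D\<^sup>2 * (4 * (l * D\<^sup>2)) * (L * P)"
      using FC Y Z by (intro mult_mono) auto
    also have "\<dots> = 4 * D\<^sup>2 * (l * D\<^sup>2 * L) * P" by (simp add: algebra_simps)
    also have "\<dots> \<le> 4 * D\<^sup>2 * M * P" using M(2) assms(3) by (intro mult_right_mono mult_left_mono) auto
    finally show ?thesis by (simp add: mult.assoc)
  qed
  have t3: "dC * Y \<le> 4 * (D\<^sup>2 * M * P)"
  proof -
    have "dC * Y \<le> P * (4 * (l * D\<^sup>2))" using dC Y assms(3) by (intro mult_mono) auto
    also have "\<dots> \<le> P * (4 * (M * D\<^sup>2))" using M(1) assms(3) by (intro mult_left_mono mult_right_mono) auto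
    finally show ?thesis by (simp add: algebra_simps)
  qed
  have t4: "FC' * dY \<le> 9 * (1 + s1\<^sup>2) * (D\<^sup>2 * M * P)"
  proof -
    have "FC' * dY \<le> D\<^sup>2 * (3 * (1 + s1\<^sup>2) * (3 * M) * P)"
      using FC' dY M(3) assms(3) by (intro mult_mono order_trans[OF dY(2)] mult_right_mono mult_left_mono) auto
    then show ?thesis by (simp add: algebra_simps)
  qed
  have n2: "D\<^sup>2 * M * P \<le> n\<^sup>2 * (D\<^sup>2 * M * P)"
    using mult_right_mono[OF one_le_power[OF assms(1), of 2] DMP] by simp
  have "s2\<^sup>2 * n\<^sup>2 * (FC * Y * Z) + s1\<^sup>2 * (W * FC * Y + n\<^sup>2 * (dC * Y) + n\<^sup>2 * (FC' * dY))
      \<le> s2\<^sup>2 * n\<^sup>2 * (4 * (D\<^sup>2 * M * P)) + s1\<^sup>2 * (576 * m2\<^sup>2 * (1 + s1\<^sup>2) * (n\<^sup>2 * (D\<^sup>2 * M * P))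
        + n\<^sup>2 * (4 * (D\<^sup>2 * M * P)) + n\<^sup>2 * (9 * (1 + s1\<^sup>2) * (D\<^sup>2 * M * P)))"
    using t1 t3 t4 order_trans[OF weight_term_le[OF assms(2,3) M(4) FC Y Y' dY W] mult_left_mono[OF n2]]
    by (intro add_mono mult_left_mono) auto
  then show ?thesis by (simp add: algebra_simps)
qed

lemma gradient_coefficient_le:
  fixes s1 s2 m2 :: real
  assumes "0 \<le> s1" "0 \<le> s2" "0 \<le> m2"
  shows "16 * (4 * s2\<^sup>2 + 4 * s1\<^sup>2 + 9 * s1\<^sup>2 * (1 + s1\<^sup>2) + 576 * s1\<^sup>2 * m2\<^sup>2 * (1 + s1\<^sup>2))
    \<le> 10000 * (1 + s1) ^ 4 * (1 + s2)\<^sup>2 * (1 + m2)\<^sup>2"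
proof -
  have sq: "1 + t\<^sup>2 \<le> (1 + t)\<^sup>2" if "0 \<le> t" for t :: real
    using that by (simp add: power2_eq_square algebra_simps)
  have "(1 + s1\<^sup>2)\<^sup>2 \<le> ((1 + s1)\<^sup>2)\<^sup>2"
    using sq[OF assms(1)] by (intro power_mono) auto
  then have u: "(1 + s1\<^sup>2)\<^sup>2 \<le> (1 + s1) ^ 4" by (simp flip: power_mult)
  have around: "1 \<le> (1 + t)\<^sup>2" "t \<le> (1 + t)\<^sup>2" "t * (1 + t) \<le> (1 + t)\<^sup>2" if "0 \<le> t" for t :: real
    using that by (simp_all add: power2_eq_square algebra_simps)
  note u1 = around(1)[of "s1\<^sup>2", simplified] and u2 = around(2)[of "s1\<^sup>2", simplified]
    and u3 = around(3)[of "s1\<^sup>2", simplified]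
  have v: "1 \<le> (1 + s2)\<^sup>2" "s2\<^sup>2 \<le> (1 + s2)\<^sup>2" and w: "1 \<le> (1 + m2)\<^sup>2" "m2\<^sup>2 \<le> (1 + m2)\<^sup>2"
    using sq[OF assms(2)] sq[OF assms(3)] zero_le_power2[of s2] zero_le_power2[of m2] by linarith+
  have prod: "a * b * c \<le> (1 + s1) ^ 4 * (1 + s2)\<^sup>2 * (1 + m2)\<^sup>2"
    if "0 \<le> a" "a \<le> (1 + s1\<^sup>2)\<^sup>2" "0 \<le> b" "b \<le> (1 + s2)\<^sup>2" "0 \<le> c" "c \<le> (1 + m2)\<^sup>2" for a b c
    using that u by (intro mult_mono) (auto intro: order_trans)
  have "s2\<^sup>2 \<le> (1 + s1) ^ 4 * (1 + s2)\<^sup>2 * (1 + m2)\<^sup>2" using prod[of 1 "s2\<^sup>2" 1] u1 v w by simp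
  moreover have "s1\<^sup>2 \<le> (1 + s1) ^ 4 * (1 + s2)\<^sup>2 * (1 + m2)\<^sup>2" using prod[of "s1\<^sup>2" 1 1] u2 v w by simp
  moreover have "s1\<^sup>2 * (1 + s1\<^sup>2) \<le> (1 + s1) ^ 4 * (1 + s2)\<^sup>2 * (1 + m2)\<^sup>2"
    using prod[of "s1\<^sup>2 * (1 + s1\<^sup>2)" 1 1] u3 v w by simp
  moreover have "s1\<^sup>2 * m2\<^sup>2 * (1 + s1\<^sup>2) \<le> (1 + s1) ^ 4 * (1 + s2)\<^sup>2 * (1 + m2)\<^sup>2"
    using prod[of "s1\<^sup>2 * (1 + s1\<^sup>2)" 1 "m2\<^sup>2"] u3 v w by (simp add: mult_ac)
  moreover have "0 \<le> (1 + s1) ^ 4 * (1 + s2)\<^sup>2 * (1 + m2)\<^sup>2" by simp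
  moreover have "16 * (4 * a + 4 * b + 9 * c + 576 * e) \<le> 10000 * K"
    if "a \<le> K" "b \<le> K" "c \<le> K" "e \<le> K" "0 \<le> K" for a b c e K :: real
    using that by simp
  ultimately show ?thesis unfolding mult.assoc by blast
qed

lemma binomial_product_eq_trivariate_poly:
  "\<exists>(a :: nat \<Rightarrow> nat \<Rightarrow> nat \<Rightarrow> real) (N :: nat). \<forall>x y z :: real.
     (\<Sum>i\<le>N. \<Sum>j\<le>N. \<Sum>p\<le>N. a i j p * x ^ i * y ^ j * z ^ p) = c * (1 + x) ^ \<alpha> * (1 + y) ^ \<beta> * (1 + z) ^ \<gamma>"
proof (intro exI allI)
  fix x y z :: real
  define N where "N = max \<alpha> (max \<beta> \<gamma>)"
  have binom: "(1 + t) ^ m = (\<Sum>i\<le>N. real (m choose i) * t ^ i)" if "m \<le> N" for t :: real and m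
  proof -
    have "(1 + t) ^ m = (\<Sum>i\<le>m. real (m choose i) * t ^ i)"
      using binomial_ring[of t 1 m] by (simp add: add.commute)
    also have "\<dots> = (\<Sum>i\<le>N. real (m choose i) * t ^ i)"
      using that by (intro sum.mono_neutral_left) auto
    finally show ?thesis .
  qed
  have "c * (1 + x) ^ \<alpha> * (1 + y) ^ \<beta> * (1 + z) ^ \<gamma> = c * (\<Sum>i\<le>N. real (\<alpha> choose i) * x ^ i)
      * (\<Sum>j\<le>N. real (\<beta> choose j) * y ^ j) * (\<Sum>p\<le>N. real (\<gamma> choose p) * z ^ p)"
    by (simp add: binom N_def)
  also have "\<dots> = (\<Sum>i\<le>N. \<Sum>j\<le>N. \<Sum>p\<le>N. (c * real (\<alpha> choose i) * real (\<beta> choose j) * real (\<gamma> choose p))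
      * x ^ i * y ^ j * z ^ p)"
    by (simp add: sum_distrib_left sum_distrib_right mult_ac)
  finally show "(\<Sum>i\<le>N. \<Sum>j\<le>N. \<Sum>p\<le>N. (\<lambda>i j p. c * real (\<alpha> choose i) * real (\<beta> choose j) * real (\<gamma> choose p)) i j p
      * x ^ i * y ^ j * z ^ p) = c * (1 + x) ^ \<alpha> * (1 + y) ^ \<beta> * (1 + z) ^ \<gamma>"
    by simp
qed

locale activation_bounds =
  fixes \<sigma> \<sigma>' \<sigma>'' :: "real \<Rightarrow> real" and s1 s2 :: real
    and \<mu> \<mu>' \<mu>'' :: "real \<Rightarrow> real" and m2 :: real
  assumes \<sigma>_deriv: "\<And>x. (\<sigma> has_real_derivative \<sigma>' x) (at x)"
    and \<sigma>'_deriv: "\<And>x. (\<sigma>' has_real_derivative \<sigma>'' x) (at x)"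
    and \<sigma>_bound: "\<And>x. \<bar>\<sigma> x\<bar> \<le> 1"
    and \<sigma>'_bound: "\<And>x. \<bar>\<sigma>' x\<bar> \<le> s1"
    and \<sigma>''_bound: "\<And>x. \<bar>\<sigma>'' x\<bar> \<le> s2"
    and \<mu>_deriv: "\<And>x. (\<mu> has_real_derivative \<mu>' x) (at x)"
    and \<mu>'_deriv: "\<And>x. (\<mu>' has_real_derivative \<mu>'' x) (at x)"
    and \<mu>'_bound: "\<And>x. \<bar>\<mu>' x\<bar> \<le> 1"
    and \<mu>''_bound: "\<And>x. \<bar>\<mu>'' x\<bar> \<le> m2"
begin

lemma s1_nonneg: "0 \<le> s1"
  using \<sigma>'_bound[of 0] by linarith

lemma s2_nonneg: "0 \<le> s2"
  using \<sigma>''_bound[of 0] by linarith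

lemma m2_nonneg: "0 \<le> m2"
  using \<mu>''_bound[of 0] by linarith

lemma \<sigma>'_scaled_gram_pairing_diff_power2_le:
  fixes n k :: nat
  assumes "\<And>i j. \<bar>w i j\<bar> \<le> 1" and "\<And>i j. \<bar>w' i j\<bar> \<le> 1"
  defines "N \<equiv> n * k"
  shows "(\<sigma>' z * gram_pairing n k w u v - \<sigma>' z' * gram_pairing n k w' u' v')\<^sup>2 \<le> 16 *
     (s2\<^sup>2 * (real n)\<^sup>2 * sqnorm N u * sqnorm N v * (z - z')\<^sup>2
      + s1\<^sup>2 * (frob_sqnorm n n (\<lambda>i j. w i j - w' i j) * sqnorm N u * sqnorm N v
               + (real n)\<^sup>2 * sqnorm N (\<lambda>p. u p - u' p) * sqnorm N v
               + (real n)\<^sup>2 * sqnorm N u' * sqnorm N (\<lambda>p. v p - v' p)))"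
proof -
  note w = frob_sqnorm_le_of_abs_le_1[OF assms(1), of n] frob_sqnorm_le_of_abs_le_1[OF assms(2), of n]
  have "(\<sigma>' z - \<sigma>' z')\<^sup>2 \<le> s2\<^sup>2 * (z - z')\<^sup>2"
    by (rule power2_diff_le_of_deriv_bound[OF \<sigma>'_deriv \<sigma>''_bound])
  moreover have "(\<sigma>' z')\<^sup>2 \<le> s1\<^sup>2"
    using \<sigma>'_bound[of z'] s1_nonneg by (simp add: abs_le_square_iff[symmetric])
  ultimately have "16 * ((\<sigma>' z - \<sigma>' z')\<^sup>2 * frob_sqnorm n n w * sqnorm N u * sqnorm N v
      + (\<sigma>' z')\<^sup>2 * (frob_sqnorm n n (\<lambda>i j. w i j - w' i j) * sqnorm N u * sqnorm N v
               + frob_sqnorm n n w' * sqnorm N (\<lambda>p. u p - u' p) * sqnorm N v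
               + frob_sqnorm n n w' * sqnorm N u' * sqnorm N (\<lambda>p. v p - v' p)))
    \<le> 16 * (s2\<^sup>2 * (z - z')\<^sup>2 * (real n)\<^sup>2 * sqnorm N u * sqnorm N v
      + s1\<^sup>2 * (frob_sqnorm n n (\<lambda>i j. w i j - w' i j) * sqnorm N u * sqnorm N v
               + (real n)\<^sup>2 * sqnorm N (\<lambda>p. u p - u' p) * sqnorm N v
               + (real n)\<^sup>2 * sqnorm N u' * sqnorm N (\<lambda>p. v p - v' p)))"
    using w by (intro mult_left_mono add_mono mult_mono order_refl) (auto intro: mult_nonneg_nonneg)
  with scaled_gram_pairing_diff_power2_le[where a = "\<sigma>' z" and a' = "\<sigma>' z'" and n = n and k = k
      and w = w and u = u and v = v and w' = w' and u' = u' and v' = v']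
  show ?thesis unfolding N_def by (simp add: algebra_simps)
qed

lemma sqnorm_grad_b_diff_le:
  fixes n k l :: nat and S A C A' C' :: "nat \<Rightarrow> nat \<Rightarrow> real" and b d b' d' :: "nat \<Rightarrow> real"
  defines "r \<equiv> n * (n + 1) div 2" and "x \<equiv> \<lambda>s. hvec n S ! s"
  defines "y \<equiv> net \<sigma> r l A b C d x" and "y' \<equiv> net \<sigma> r l A' b' C' d' x"
  defines "w \<equiv> \<lambda>i j. \<mu>' (gmat_mult_transpose k y y i j - S i j)"
    and "w' \<equiv> \<lambda>i j. \<mu>' (gmat_mult_transpose k y' y' i j - S i j)"
  shows "sqnorm l (\<lambda>q. grad_b \<sigma> \<mu> n k l S A b C d q - grad_b \<sigma> \<mu> n k l S A' b' C' d' q)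
    \<le> 16 * (s2\<^sup>2 * (real n)\<^sup>2 * (frob_sqnorm (n * k) l C * sqnorm (n * k) y
              * sqnorm l (\<lambda>q. preact r A b x q - preact r A' b' x q))
           + s1\<^sup>2 * (frob_sqnorm n n (\<lambda>i j. w i j - w' i j) * frob_sqnorm (n * k) l C * sqnorm (n * k) y
              + (real n)\<^sup>2 * (frob_sqnorm (n * k) l (\<lambda>p q. C p q - C' p q) * sqnorm (n * k) y)
              + (real n)\<^sup>2 * (frob_sqnorm (n * k) l C' * sqnorm (n * k) (\<lambda>p. y p - y' p))))"
proof -
  define N where "N = n * k"
  define z where "z q = preact r A b x q - preact r A' b' x q" for q
  define R where "R q = s1\<^sup>2 * (frob_sqnorm n n (\<lambda>i j. w i j - w' i j) * sqnorm N (\<lambda>p. C p q) * sqnorm N y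
      + (real n)\<^sup>2 * sqnorm N (\<lambda>p. C p q - C' p q) * sqnorm N y
      + (real n)\<^sup>2 * sqnorm N (\<lambda>p. C' p q) * sqnorm N (\<lambda>p. y p - y' p))" for q
  have "(grad_b \<sigma> \<mu> n k l S A b C d q - grad_b \<sigma> \<mu> n k l S A' b' C' d' q)\<^sup>2
      \<le> 16 * (s2\<^sup>2 * (real n)\<^sup>2 * frob_sqnorm N l C * sqnorm N y * (z q)\<^sup>2 + R q)"
    if "q < l" for q
  proof -
    have "(grad_b \<sigma> \<mu> n k l S A b C d q - grad_b \<sigma> \<mu> n k l S A' b' C' d' q)\<^sup>2
      \<le> 16 * (s2\<^sup>2 * (real n)\<^sup>2 * sqnorm N (\<lambda>p. C p q) * sqnorm N y * (z q)\<^sup>2 + R q)"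
      unfolding grad_b_eq[OF \<sigma>_deriv \<mu>_deriv that] N_def z_def R_def
      unfolding r_def x_def y_def y'_def w_def w'_def
      by (rule \<sigma>'_scaled_gram_pairing_diff_power2_le) (rule \<mu>'_bound)+
    also have "\<dots> \<le> 16 * (s2\<^sup>2 * (real n)\<^sup>2 * frob_sqnorm N l C * sqnorm N y * (z q)\<^sup>2 + R q)"
      using sqnorm_column_le_frob_sqnorm[OF that, of N C]
      by (intro mult_left_mono add_mono mult_right_mono order_refl) auto
    finally show ?thesis .
  qed
  then have "sqnorm l (\<lambda>q. grad_b \<sigma> \<mu> n k l S A b C d q - grad_b \<sigma> \<mu> n k l S A' b' C' d' q)
      \<le> (\<Sum>q<l. 16 * (s2\<^sup>2 * (real n)\<^sup>2 * frob_sqnorm N l C * sqnorm N y * (z q)\<^sup>2 + R q))"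
    unfolding sqnorm_def[of l] by (intro sum_mono) auto
  also have "\<dots> = 16 * (s2\<^sup>2 * (real n)\<^sup>2 * frob_sqnorm N l C * sqnorm N y * sqnorm l z
           + s1\<^sup>2 * (frob_sqnorm n n (\<lambda>i j. w i j - w' i j) * frob_sqnorm N l C * sqnorm N y
              + (real n)\<^sup>2 * frob_sqnorm N l (\<lambda>p q. C p q - C' p q) * sqnorm N y
              + (real n)\<^sup>2 * frob_sqnorm N l C' * sqnorm N (\<lambda>p. y p - y' p)))"
    unfolding frob_sqnorm_eq_sum_sqnorm_columns[of N l] sqnorm_def[of l z] R_def
    by (simp only: sum.distrib[symmetric] sum_distrib_left sum_distrib_right)
  finally show ?thesis
    unfolding N_def z_def by (simp add: algebra_simps)
qed

lemma sqnorm_net_le_param_norm: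
  assumes "1 \<le> l" and "param_norm n k l A b C d \<le> D"
  shows "sqnorm (n * k) (net \<sigma> r l A b C d x) \<le> 4 * (real l * D\<^sup>2)"
proof -
  have "(param_norm n k l A b C d)\<^sup>2 \<le> D\<^sup>2" using assms(2) by (intro power_mono) auto
  then have C: "frob_sqnorm (n * k) l C \<le> D\<^sup>2" and d: "sqnorm (n * k) d \<le> D\<^sup>2"
    using param_norm_power2_ge(2,3)[where n = n and k = k and l = l and A = A and b = b and C = C and d = d] by linarith+
  have "D\<^sup>2 \<le> real l * D\<^sup>2"
    using mult_right_mono[of 1 "real l" "D\<^sup>2"] assms(1) by simp
  have "sqnorm (n * k) (net \<sigma> r l A b C d x) \<le> 2 * (real l * frob_sqnorm (n * k) l C + sqnorm (n * k) d)"
    unfolding net_eq by (rule sqnorm_affine_le) (simp add: \<sigma>_bound)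
  also have "\<dots> \<le> 2 * (real l * D\<^sup>2 + real l * D\<^sup>2)"
    using C d \<open>D\<^sup>2 \<le> real l * D\<^sup>2\<close> by (intro mult_left_mono add_mono) auto
  finally show ?thesis by simp
qed

lemma sqnorm_net_diff_le_param_norm:
  fixes n k l :: nat and A C A' C' :: "nat \<Rightarrow> nat \<Rightarrow> real" and b d b' d' :: "nat \<Rightarrow> real"
  assumes "param_norm n k l A' b' C' d' \<le> D"
  defines "r \<equiv> n * (n + 1) div 2"
    and "P \<equiv> (param_norm n k l (\<lambda>q s. A q s - A' q s) (\<lambda>q. b q - b' q)
                (\<lambda>p q. C p q - C' p q) (\<lambda>p. d p - d' p))\<^sup>2"
  shows "sqnorm (n * k) (\<lambda>p. net \<sigma> r l A b C d x p - net \<sigma> r l A' b' C' d' x p)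
    \<le> 3 * (1 + s1\<^sup>2) * (real l + D\<^sup>2 * (1 + sqnorm r x) + 1) * P"
proof -
  note P = param_norm_power2_ge[where n = n and k = k and l = l and A = "\<lambda>q s. A q s - A' q s"
      and b = "\<lambda>q. b q - b' q" and C = "\<lambda>p q. C p q - C' p q" and d = "\<lambda>p. d p - d' p", folded r_def P_def]
  have "(param_norm n k l A' b' C' d')\<^sup>2 \<le> D\<^sup>2" using assms(1) by (intro power_mono) auto
  then have C': "frob_sqnorm (n * k) l C' \<le> D\<^sup>2"
    using param_norm_power2_ge(2)[where n = n and k = k and l = l and A = A' and b = b' and C = C' and d = d'] by linarith
  have "sqnorm l (\<lambda>q. \<sigma> (preact r A b x q) - \<sigma> (preact r A' b' x q))
      \<le> s1\<^sup>2 * sqnorm l (\<lambda>q. preact r A b x q - preact r A' b' x q)"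
    unfolding sqnorm_def sum_distrib_left
    by (intro sum_mono power2_diff_le_of_deriv_bound[OF \<sigma>_deriv \<sigma>'_bound])
  also have "\<dots> \<le> s1\<^sup>2 * ((1 + sqnorm r x) * P)"
    unfolding r_def P_def by (intro mult_left_mono sqnorm_preact_diff_le_param_norm) simp
  finally have \<sigma>_diff: "sqnorm l (\<lambda>q. \<sigma> (preact r A b x q) - \<sigma> (preact r A' b' x q)) \<le> s1\<^sup>2 * ((1 + sqnorm r x) * P)" .
  have "sqnorm (n * k) (\<lambda>p. net \<sigma> r l A b C d x p - net \<sigma> r l A' b' C' d' x p)
      \<le> 3 * (real l * frob_sqnorm (n * k) l (\<lambda>p q. C p q - C' p q)
         + frob_sqnorm (n * k) l C' * sqnorm l (\<lambda>q. \<sigma> (preact r A b x q) - \<sigma> (preact r A' b' x q))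
         + sqnorm (n * k) (\<lambda>p. d p - d' p))"
    unfolding net_eq by (rule sqnorm_affine_diff_le) (simp add: \<sigma>_bound)
  also have "\<dots> \<le> 3 * (real l * P + D\<^sup>2 * (s1\<^sup>2 * ((1 + sqnorm r x) * P)) + P)"
    using P(2,3) C' \<sigma>_diff by (intro mult_left_mono add_mono mult_mono) auto
  also have "\<dots> \<le> 3 * (1 + s1\<^sup>2) * (real l + D\<^sup>2 * (1 + sqnorm r x) + 1) * P"
  proof -
    have "0 \<le> P * (s1\<^sup>2 * real l + D\<^sup>2 * (1 + sqnorm r x) + s1\<^sup>2)"
      unfolding P_def by (intro mult_nonneg_nonneg add_nonneg_nonneg) simp_all
    then show ?thesis by (simp add: algebra_simps)
  qed
  finally show ?thesis .
qed

lemma frob_sqnorm_weights_diff_le: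
  "frob_sqnorm n n (\<lambda>i j. \<mu>' (gmat_mult_transpose k y y i j - S i j) - \<mu>' (gmat_mult_transpose k y' y' i j - S i j))
    \<le> 2 * m2\<^sup>2 * sqnorm (n * k) (\<lambda>p. y p - y' p) * (sqnorm (n * k) y + sqnorm (n * k) y')"
proof -
  let ?\<Delta> = "\<lambda>p. y p - y' p"
  have "(\<mu>' (gmat_mult_transpose k y y i j - S i j) - \<mu>' (gmat_mult_transpose k y' y' i j - S i j))\<^sup>2
      \<le> m2\<^sup>2 * (gmat_mult_transpose k ?\<Delta> y i j + gmat_mult_transpose k y' ?\<Delta> i j)\<^sup>2" for i j
    using power2_diff_le_of_deriv_bound[OF \<mu>'_deriv \<mu>''_bound,
        of "gmat_mult_transpose k y y i j - S i j" "gmat_mult_transpose k y' y' i j - S i j"]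
    by (simp add: gmat_mult_transpose_diff_left gmat_mult_transpose_diff_right)
  also have "\<dots> i j \<le> m2\<^sup>2 * (2 * ((gmat_mult_transpose k ?\<Delta> y i j)\<^sup>2 + (gmat_mult_transpose k y' ?\<Delta> i j)\<^sup>2))" for i j
    by (intro mult_left_mono power2_add_le) simp
  finally have "frob_sqnorm n n (\<lambda>i j. \<mu>' (gmat_mult_transpose k y y i j - S i j) - \<mu>' (gmat_mult_transpose k y' y' i j - S i j))
      \<le> 2 * m2\<^sup>2 * (frob_sqnorm n n (gmat_mult_transpose k ?\<Delta> y) + frob_sqnorm n n (gmat_mult_transpose k y' ?\<Delta>))"
    unfolding frob_sqnorm_def by (force simp: sum_distrib_left sum.distrib[symmetric] algebra_simps intro: sum_mono)
  also have "\<dots> \<le> 2 * m2\<^sup>2 * (sqnorm (n * k) ?\<Delta> * sqnorm (n * k) y + sqnorm (n * k) y' * sqnorm (n * k) ?\<Delta>)"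
    by (intro mult_left_mono add_mono frob_sqnorm_gmat_mult_transpose_le) auto
  finally show ?thesis by (simp add: algebra_simps)
qed

lemma sqnorm_grad_b_diff_le_param_norm:
  fixes n k l :: nat and S A C A' C' :: "nat \<Rightarrow> nat \<Rightarrow> real" and b d b' d' :: "nat \<Rightarrow> real"
  assumes "1 \<le> n" "1 \<le> l" "param_norm n k l A b C d \<le> D" "param_norm n k l A' b' C' d' \<le> D"
  defines "L \<equiv> 1 + (normS n S)\<^sup>2"
  defines "M \<equiv> Max {real l * D\<^sup>2 * L, (real l)\<^sup>2 * D ^ 6 * L, real l ^ 3 * D ^ 4, real n * real l}"
    and "P \<equiv> (param_norm n k l (\<lambda>q s. A q s - A' q s) (\<lambda>q. b q - b' q)
                (\<lambda>p q. C p q - C' p q) (\<lambda>p. d p - d' p))\<^sup>2"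
  shows "sqnorm l (\<lambda>q. grad_b \<sigma> \<mu> n k l S A b C d q - grad_b \<sigma> \<mu> n k l S A' b' C' d' q)
    \<le> 16 * (4 * s2\<^sup>2 + 4 * s1\<^sup>2 + 9 * s1\<^sup>2 * (1 + s1\<^sup>2) + 576 * s1\<^sup>2 * m2\<^sup>2 * (1 + s1\<^sup>2))
         * ((real n)\<^sup>2 * D\<^sup>2 * M * P)"
proof -
  define r where "r = n * (n + 1) div 2"
  define x where "x = (\<lambda>s. hvec n S ! s)"
  define y where "y = net \<sigma> r l A b C d x"
  define y' where "y' = net \<sigma> r l A' b' C' d' x"
  have L: "L = 1 + sqnorm r x" unfolding L_def r_def x_def normS_power2 ..
  note P = param_norm_power2_ge[where n = n and k = k and l = l and A = "\<lambda>q s. A q s - A' q s"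
      and b = "\<lambda>q. b q - b' q" and C = "\<lambda>p q. C p q - C' p q" and d = "\<lambda>p. d p - d' p", folded r_def P_def]
  have "(param_norm n k l A b C d)\<^sup>2 \<le> D\<^sup>2" "(param_norm n k l A' b' C' d')\<^sup>2 \<le> D\<^sup>2"
    using assms(3,4) by (auto intro: power_mono)
  then have C: "frob_sqnorm (n * k) l C \<le> D\<^sup>2" "frob_sqnorm (n * k) l C' \<le> D\<^sup>2"
    using param_norm_power2_ge(2)[where n = n and k = k and l = l and A = A and b = b and C = C and d = d]
      param_norm_power2_ge(2)[where n = n and k = k and l = l and A = A' and b = b' and C = C' and d = d']
    by linarith+
  have Y: "sqnorm (n * k) y \<le> 4 * (real l * D\<^sup>2)" "sqnorm (n * k) y' \<le> 4 * (real l * D\<^sup>2)"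
    unfolding y_def y'_def using assms(2-4) by (auto intro: sqnorm_net_le_param_norm)
  have dY: "sqnorm (n * k) (\<lambda>p. y p - y' p) \<le> 3 * (1 + s1\<^sup>2) * (real l + D\<^sup>2 * L + 1) * P"
    unfolding y_def y'_def L r_def P_def by (rule sqnorm_net_diff_le_param_norm[OF assms(4)])
  have Z: "sqnorm l (\<lambda>q. preact r A b x q - preact r A' b' x q) \<le> L * P"
    unfolding L r_def P_def by (rule sqnorm_preact_diff_le_param_norm)
  have "1 \<le> L" unfolding L_def by simp
  have "0 \<le> P" unfolding P_def by simp
  have nl: "1 \<le> real n" "1 \<le> real l" using assms(1,2) by simp_all
  note T = gradient_terms_le[where n = "real n" and l = "real l" and D = D and L = L and P = P and ?s2.0 = s2,
      OF nl(1) of_nat_0_le_iff \<open>0 \<le> P\<close> Max_monomials_ge[OF nl \<open>1 \<le> L\<close>, of D] frob_sqnorm_nonneg C sqnorm_nonneg Y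
        sqnorm_nonneg Z P(2) sqnorm_nonneg dY frob_sqnorm_weights_diff_le[where n = n and k = k and y = y and S = S and y' = y']]
  show ?thesis
    using order_trans[OF sqnorm_grad_b_diff_le[where n = n and k = k and l = l and S = S and A = A and b = b
        and C = C and d = d and A' = A' and b' = b' and C' = C' and d' = d',
        folded r_def x_def, folded y_def y'_def] mult_left_mono[OF T, of 16]]
    unfolding M_def by (simp only: mult.assoc)
qed

lemma grad_b_lipschitz:
  fixes n k l :: nat and S :: "nat \<Rightarrow> nat \<Rightarrow> real" and D :: real
  assumes "1 \<le> n" "1 \<le> l" and Cb: "Cb = 10000 * (1 + s1) ^ 4 * (1 + s2)\<^sup>2 * (1 + m2)\<^sup>2"
  shows "let LZ = sqrt (1 + (normS n S)\<^sup>2) in \<exists>Lb. Lb \<ge> 0 \<and>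
      Lb\<^sup>2 = Cb * (real n)\<^sup>2 * D\<^sup>2 *
        Max {real l * D\<^sup>2 * LZ\<^sup>2, (real l)\<^sup>2 * D ^ 6 * LZ\<^sup>2, (real l) ^ 3 * D ^ 4, real n * real l} \<and>
      (\<forall>A b C d A' b' C' d'.
         param_norm n k l A b C d \<le> D \<longrightarrow> param_norm n k l A' b' C' d' \<le> D \<longrightarrow>
         vnorm l (\<lambda>q. grad_b \<sigma> \<mu> n k l S A b C d q - grad_b \<sigma> \<mu> n k l S A' b' C' d' q)
           \<le> Lb * param_norm n k l (\<lambda>q s. A q s - A' q s) (\<lambda>q. b q - b' q)
                                    (\<lambda>p q. C p q - C' p q) (\<lambda>p. d p - d' p))"
proof -
  define L where "L = 1 + (normS n S)\<^sup>2"
  have LZ: "(sqrt (1 + (normS n S)\<^sup>2))\<^sup>2 = L" by (simp add: L_def)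
  define M where "M = Max {real l * D\<^sup>2 * L, (real l)\<^sup>2 * D ^ 6 * L, (real l) ^ 3 * D ^ 4, real n * real l}"
  define K where "K = Cb * (real n)\<^sup>2 * D\<^sup>2 * M"
  have "real n * real l \<le> M" unfolding M_def by (auto intro: Max_ge)
  then have M0: "0 \<le> M" by (simp add: order_trans[OF _ \<open>real n * real l \<le> M\<close>])
  have K0: "0 \<le> K" unfolding K_def Cb using M0 by simp
  have "vnorm l (\<lambda>q. grad_b \<sigma> \<mu> n k l S A b C d q - grad_b \<sigma> \<mu> n k l S A' b' C' d' q)
      \<le> sqrt K * param_norm n k l (\<lambda>q s. A q s - A' q s) (\<lambda>q. b q - b' q) (\<lambda>p q. C p q - C' p q) (\<lambda>p. d p - d' p)"
    if "param_norm n k l A b C d \<le> D" "param_norm n k l A' b' C' d' \<le> D" for A b C d A' b' C' d'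
  proof -
    let ?P = "param_norm n k l (\<lambda>q s. A q s - A' q s) (\<lambda>q. b q - b' q) (\<lambda>p q. C p q - C' p q) (\<lambda>p. d p - d' p)"
    have "sqnorm l (\<lambda>q. grad_b \<sigma> \<mu> n k l S A b C d q - grad_b \<sigma> \<mu> n k l S A' b' C' d' q)
        \<le> 16 * (4 * s2\<^sup>2 + 4 * s1\<^sup>2 + 9 * s1\<^sup>2 * (1 + s1\<^sup>2) + 576 * s1\<^sup>2 * m2\<^sup>2 * (1 + s1\<^sup>2))
           * ((real n)\<^sup>2 * D\<^sup>2 * M * ?P\<^sup>2)"
      unfolding M_def L_def by (rule sqnorm_grad_b_diff_le_param_norm[OF assms(1,2) that])
    also have "\<dots> \<le> K * ?P\<^sup>2"
      using mult_right_mono[OF gradient_coefficient_le[OF s1_nonneg s2_nonneg m2_nonneg], of "(real n)\<^sup>2 * D\<^sup>2 * M * ?P\<^sup>2"] M0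
      unfolding K_def Cb by (simp add: mult.assoc)
    finally have "vnorm l (\<lambda>q. grad_b \<sigma> \<mu> n k l S A b C d q - grad_b \<sigma> \<mu> n k l S A' b' C' d' q) \<le> sqrt (K * ?P\<^sup>2)"
      unfolding vnorm_def sqnorm_def by (rule real_sqrt_le_mono)
    also have "\<dots> = sqrt K * ?P" by (simp add: real_sqrt_mult)
    finally show ?thesis .
  qed
  then show ?thesis
    unfolding Let_def LZ using K0 by (intro exI[of _ "sqrt K"]) (simp add: K_def M_def)
qed

end

theorem lemma4:
  "\<exists>(a :: nat \<Rightarrow> nat \<Rightarrow> nat \<Rightarrow> real) (N :: nat).
    \<forall>(\<sigma> :: real \<Rightarrow> real) \<sigma>1 \<sigma>2 (s1 :: real) (s2 :: real)
      (\<mu> :: real \<Rightarrow> real) \<mu>1 \<mu>2 (m2 :: real)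
      (n :: nat) (k :: nat) (l :: nat) (S :: nat \<Rightarrow> nat \<Rightarrow> real) (D :: real).
      ((\<forall>x. (\<sigma> has_real_derivative \<sigma>1 x) (at x)) \<and>
       (\<forall>x. (\<sigma>1 has_real_derivative \<sigma>2 x) (at x)) \<and>
       (\<forall>x. \<bar>\<sigma> x\<bar> \<le> 1) \<and>
       s1 > 0 \<and> (\<forall>x. \<bar>\<sigma>1 x\<bar> \<le> s1) \<and> (\<forall>x. \<bar>\<sigma>2 x\<bar> \<le> s2) \<and>
       smooth_fun \<mu> \<and>
       (\<forall>x. (\<mu> has_real_derivative \<mu>1 x) (at x)) \<and>
       (\<forall>x. (\<mu>1 has_real_derivative \<mu>2 x) (at x)) \<and>
       (\<forall>x. \<bar>\<mu>1 x\<bar> \<le> 1) \<and> (\<forall>x. \<bar>\<mu>2 x\<bar> \<le> m2) \<and>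
       1 \<le> n \<and> 1 \<le> k \<and> k \<le> n \<and> 1 \<le> l \<and>
       (\<forall>i<n. \<forall>j<n. S i j = S j i) \<and> D > 0)
      \<longrightarrow>
      (let LZ = sqrt (1 + (normS n S)\<^sup>2);
           Cb = (\<Sum>i\<le>N. \<Sum>j\<le>N. \<Sum>p\<le>N. a i j p * s1 ^ i * s2 ^ j * m2 ^ p)
       in \<exists>Lb. Lb \<ge> 0 \<and>
            Lb\<^sup>2 = Cb * (real n)\<^sup>2 * D\<^sup>2 *
                  Max {real l * D\<^sup>2 * LZ\<^sup>2, (real l)\<^sup>2 * D ^ 6 * LZ\<^sup>2,
                       (real l) ^ 3 * D ^ 4, real n * real l} \<and>
            (\<forall>A b C d A' b' C' d'.
               param_norm n k l A b C d \<le> D \<longrightarrow> param_norm n k l A' b' C' d' \<le> D \<longrightarrow>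
               vnorm l (\<lambda>q. grad_b \<sigma> \<mu> n k l S A b C d q - grad_b \<sigma> \<mu> n k l S A' b' C' d' q)
                 \<le> Lb * param_norm n k l (\<lambda>q s. A q s - A' q s) (\<lambda>q. b q - b' q)
                                          (\<lambda>p q. C p q - C' p q) (\<lambda>p. d p - d' p)))"
proof -
  obtain a N where poly: "\<forall>x y z :: real. (\<Sum>i\<le>N. \<Sum>j\<le>N. \<Sum>p\<le>N. a i j p * x ^ i * y ^ j * z ^ p)
      = 10000 * (1 + x) ^ 4 * (1 + y) ^ 2 * (1 + z) ^ 2"
    using binomial_product_eq_trivariate_poly[of 10000 4 2 2] by blast
  show ?thesis
    by (intro exI[of _ a] exI[of _ N] allI impI, elim conjE, unfold Let_def,
        rule activation_bounds.grad_b_lipschitz[unfolded Let_def], unfold_locales)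
      (blast | simp add: poly)+
qed

end
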